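(* Let $I\subset\mathbb{Z}$ be an interval and let $\vec r,\vec{\bar r}:I\to\mathbb{R}^2$ be two nondegenerate discrete planar curves whose first and second centroaffine curvatures coincide at corresponding points, i.e. $\kappa_k(\vec r)=\kappa_k(\vec{\bar r})$ and $\bar\kappa_k(\vec r)=\bar\kappa_k(\vec{\bar r})$ for every $k$ at which they are defined. Then there exist a matrix $A\in GL(2,\mathbb{R})$ and a constant vector $\vec C\in\mathbb{R}^2$ such that $\vec r(k)=A\,\vec{\bar r}(k)+\vec C$ for all $k\in I$; i.e. the two curves are affinely equivalent.
   Context: A discrete planar curve is a map $\vec r:I\to\mathbb{R}^2$, $I\subset\mathbb{Z}$ an interval (possibly infinite, containing at least three consecutive integers); write $\vec r_k=\vec r(k)$ and $\vec t_k=\vec r_{k+1}-\vec r_k$ (edge tangent vector). $[\vec a,\vec b]$ denotes the $2\times 2$ determinant. The curve is nondegenerate if $[\vec t_{k-1},\vec t_k]\neq 0$ whenever $k-1,k,k+1\in I$. Its first and second centroaffine curvatures at $k$ (whenever $k-1,k,k+1,k+2\in I$) are $\kappa_k=\frac{[\vec t_k,\vec t_{k+1}]}{[\vec t_{k-1},\vec t_k]}$ and $\bar\kappa_k=\frac{[\vec t_{k-1},\vec t_{k+1}]}{[\vec t_{k-1},\vec t_k]}$. *)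

theory Defs
  imports "HOL-Analysis.Analysis"
begin

definition det2 :: "real^2 \<Rightarrow> real^2 \<Rightarrow> real" where
  "det2 a b = a$1 * b$2 - a$2 * b$1"

definition int_interval :: "int set \<Rightarrow> bool" where
  "int_interval I \<longleftrightarrow> (\<forall>i j k. i \<in> I \<longrightarrow> k \<in> I \<longrightarrow> i \<le> j \<longrightarrow> j \<le> k \<longrightarrow> j \<in> I)
     \<and> (\<exists>k. k - 1 \<in> I \<and> k \<in> I \<and> k + 1 \<in> I)"

definition tang :: "(int \<Rightarrow> real^2) \<Rightarrow> int \<Rightarrow> real^2" where
  "tang r k = r (k + 1) - r k"

definition nondegenerate :: "int set \<Rightarrow> (int \<Rightarrow> real^2) \<Rightarrow> bool" where
  "nondegenerate I r \<longleftrightarrow>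
     (\<forall>k. k - 1 \<in> I \<and> k \<in> I \<and> k + 1 \<in> I \<longrightarrow> det2 (tang r (k - 1)) (tang r k) \<noteq> 0)"

text \<open>First and second centroaffine curvatures (meaningful when k-1,k,k+1,k+2 are in I).\<close>
definition kappa :: "(int \<Rightarrow> real^2) \<Rightarrow> int \<Rightarrow> real" where
  "kappa r k = det2 (tang r k) (tang r (k + 1)) / det2 (tang r (k - 1)) (tang r k)"

definition kappa_bar :: "(int \<Rightarrow> real^2) \<Rightarrow> int \<Rightarrow> real" where
  "kappa_bar r k = det2 (tang r (k - 1)) (tang r (k + 1)) / det2 (tang r (k - 1)) (tang r k)"

end

theory Submission
  imports Defs
begin

text \<open>Nondegeneracy makes \<open>t(k-1), t(k)\<close> a basis of the plane, and by Cramer's rule the two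
curvatures are the coordinates of the next tangent in it:
\<open>t(k+1) = -kappa(k) t(k-1) + kappa_bar(k) t(k)\<close>. So the tangents of both curves obey the same
second order linear recurrence, which can also be run backwards because \<open>kappa(k) \<noteq> 0\<close>.
An invertible matrix \<open>A\<close> sending two consecutive tangents of \<open>rb\<close> to those of \<open>r\<close> turns the
tangents of \<open>rb\<close> into a solution of that recurrence with the same initial data, hence into the
tangents of \<open>r\<close>; consequently \<open>r - A rb\<close> is constant.\<close>

lemma det2_scaleR_expansion:
  "det2 a b *\<^sub>R c = det2 c b *\<^sub>R a + det2 a c *\<^sub>R b"
  by (simp add: vec_eq_iff forall_2 det2_def algebra_simps)

lemma cramer_rule_det2:
  assumes "det2 a b \<noteq> 0"
  shows "c = (det2 c b / det2 a b) *\<^sub>R a + (det2 a c / det2 a b) *\<^sub>R b"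
proof -
  have "c = (1 / det2 a b) *\<^sub>R (det2 a b *\<^sub>R c)" using assms by simp
  also have "\<dots> = (1 / det2 a b) *\<^sub>R (det2 c b *\<^sub>R a + det2 a c *\<^sub>R b)"
    by (simp only: det2_scaleR_expansion[of a b c])
  finally show ?thesis by (simp add: scaleR_add_right)
qed

definition matrix_of_cols2 :: "real^2 \<Rightarrow> real^2 \<Rightarrow> real^2^2" where
  "matrix_of_cols2 u v = (\<chi> i j. if j = 1 then u$i else v$i)"

lemma det_matrix_of_cols2: "det (matrix_of_cols2 u v) = det2 u v"
  by (simp add: det_2 matrix_of_cols2_def det2_def)

lemma matrix_of_cols2_axis:
  "matrix_of_cols2 u v *v axis 1 1 = u" "matrix_of_cols2 u v *v axis 2 1 = v"
  by (simp_all add: vec_eq_iff forall_2 matrix_of_cols2_def matrix_vector_mult_def sum_2 axis_def)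

lemma invertible_matrix_mapping_basis:
  assumes "det2 u1 u2 \<noteq> 0" "det2 v1 v2 \<noteq> 0"
  obtains A :: "real^2^2" where "invertible A" "A *v u1 = v1" "A *v u2 = v2"
proof -
  let ?U = "matrix_of_cols2 u1 u2" and ?V = "matrix_of_cols2 v1 v2"
  have "invertible ?U" "invertible ?V"
    using assms by (simp_all add: invertible_det_nz det_matrix_of_cols2)
  then obtain B where B: "invertible B" "B ** ?U = mat 1"
    using invertible_def by blast
  have maps: "(?V ** B) *v (?U *v x) = ?V *v x" for x
    by (simp only: matrix_vector_mul_assoc flip: matrix_mul_assoc) (simp add: B(2))
  have "(?V ** B) *v u1 = v1" "(?V ** B) *v u2 = v2"
    using maps[of "axis 1 1"] maps[of "axis 2 1"] by (simp_all only: matrix_of_cols2_axis)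
  moreover have "invertible (?V ** B)"
    using \<open>invertible ?V\<close> B(1) by (rule invertible_mult)
  ultimately show thesis
    using that by blast
qed

definition int_convex :: "int set \<Rightarrow> bool" where
  "int_convex J \<longleftrightarrow> (\<forall>i j k. i \<in> J \<longrightarrow> k \<in> J \<longrightarrow> i \<le> j \<longrightarrow> j \<le> k \<longrightarrow> j \<in> J)"

lemma int_convexD: "int_convex J \<Longrightarrow> i \<in> J \<Longrightarrow> k \<in> J \<Longrightarrow> i \<le> j \<Longrightarrow> j \<le> k \<Longrightarrow> j \<in> J"
  unfolding int_convex_def by blast

lemma int_interval_imp_int_convex: "int_interval I \<Longrightarrow> int_convex I"
  unfolding int_interval_def int_convex_def by blast

lemma int_convex_edges:
  assumes "int_convex J"
  shows "int_convex {k. k \<in> J \<and> k + 1 \<in> J}"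
  unfolding int_convex_def
proof (intro allI impI, simp only: mem_Collect_eq, elim conjE)
  fix i j k
  assume "i \<in> J" "i + 1 \<in> J" "k \<in> J" "k + 1 \<in> J" "i \<le> j" "j \<le> k"
  then show "j \<in> J \<and> j + 1 \<in> J"
    using int_convexD[OF assms, of i k j] int_convexD[OF assms, of "i + 1" "k + 1" "j + 1"] by simp
qed

lemma int_convex_induct [consumes 3, case_names base up down]:
  assumes J: "int_convex J" and "k0 \<in> J" "k \<in> J"
    and base: "P k0"
    and up: "\<And>i. k0 \<le> i \<Longrightarrow> i \<in> J \<Longrightarrow> i + 1 \<in> J \<Longrightarrow> P i \<Longrightarrow> P (i + 1)"
    and down: "\<And>i. i \<le> k0 \<Longrightarrow> i \<in> J \<Longrightarrow> i - 1 \<in> J \<Longrightarrow> P i \<Longrightarrow> P (i - 1)"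
  shows "P k"
proof (cases "k0 \<le> k")
  case True
  have "k \<in> J \<longrightarrow> P k"
    using True
  proof (induction k rule: int_ge_induct)
    case (step i)
    then show ?case
      using up int_convexD[OF J \<open>k0 \<in> J\<close>, of "i + 1" i] by auto
  qed (use base in simp)
  with \<open>k \<in> J\<close> show ?thesis by simp
next
  case False
  then have "k \<le> k0" by simp
  then have "k \<in> J \<longrightarrow> P k"
  proof (induction k rule: int_le_induct)
    case (step i)
    then show ?case
      using down int_convexD[OF J _ \<open>k0 \<in> J\<close>, of "i - 1" i] by auto
  qed (use base in simp)
  with \<open>k \<in> J\<close> show ?thesis by simp
qed

lemma int_convex_constant:
  assumes "int_convex J" "k0 \<in> J" "k \<in> J"
    and step: "\<And>k. k \<in> J \<Longrightarrow> k + 1 \<in> J \<Longrightarrow> f (k + 1) = f k"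
  shows "f k = f k0"
  using assms(1-3)
proof (induction rule: int_convex_induct)
  case (down i)
  then show ?case using step[of "i - 1"] by simp
qed (use step in simp_all)

lemma second_order_recurrence_unique:
  fixes x y :: "int \<Rightarrow> 'a::real_vector"
  assumes J: "int_convex J" and k0: "k0 \<in> J" "k0 + 1 \<in> J" and "k \<in> J"
    and rec_x: "\<And>k. k - 1 \<in> J \<Longrightarrow> k \<in> J \<Longrightarrow> k + 1 \<in> J \<Longrightarrow> x (k + 1) = a k *\<^sub>R x (k - 1) + b k *\<^sub>R x k"
    and rec_y: "\<And>k. k - 1 \<in> J \<Longrightarrow> k \<in> J \<Longrightarrow> k + 1 \<in> J \<Longrightarrow> y (k + 1) = a k *\<^sub>R y (k - 1) + b k *\<^sub>R y k"
    and a_nonzero: "\<And>k. k - 1 \<in> J \<Longrightarrow> k \<in> J \<Longrightarrow> k + 1 \<in> J \<Longrightarrow> a k \<noteq> 0"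
    and init: "x k0 = y k0" "x (k0 + 1) = y (k0 + 1)"
  shows "x k = y k"
proof -
  let ?E = "{k. k \<in> J \<and> k + 1 \<in> J}"
  have "k0 \<in> ?E" using k0 by simp
  have pairs: "x j = y j \<and> x (j + 1) = y (j + 1)" if "j \<in> ?E" for j
    using int_convex_edges[OF J] \<open>k0 \<in> ?E\<close> that
  proof (induction rule: int_convex_induct)
    case (up i)
    then have "x (i + 1 + 1) = y (i + 1 + 1)"
      using rec_x[of "i + 1"] rec_y[of "i + 1"] by simp
    with up show ?case by simp
  next
    case (down i)
    then have "a i *\<^sub>R x (i - 1) = x (i + 1) - b i *\<^sub>R x i"
      and "a i *\<^sub>R y (i - 1) = y (i + 1) - b i *\<^sub>R y i"
      using rec_x[of i] rec_y[of i] by simp_all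
    with down have "a i *\<^sub>R x (i - 1) = a i *\<^sub>R y (i - 1)"
      by simp
    with down a_nonzero[of i] show ?case by simp
  qed (use init in simp)
  show ?thesis
  proof (cases "k + 1 \<in> J")
    case True
    then show ?thesis using pairs \<open>k \<in> J\<close> by simp
  next
    case False
    then have "k0 + 1 \<le> k"
      using int_convexD[OF J \<open>k \<in> J\<close> k0(2), of "k + 1"] by linarith
    then have "k - 1 \<in> ?E"
      using int_convexD[OF J k0(1) \<open>k \<in> J\<close>, of "k - 1"] \<open>k \<in> J\<close> by simp
    then show ?thesis using pairs[of "k - 1"] by simp
  qed
qed

lemma nondegenerateD:
  "nondegenerate I r \<Longrightarrow> k - 1 \<in> I \<Longrightarrow> k \<in> I \<Longrightarrow> k + 1 \<in> I \<Longrightarrow> det2 (tang r (k - 1)) (tang r k) \<noteq> 0"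
  unfolding nondegenerate_def by blast

lemma tang_recurrence:
  assumes "det2 (tang r (k - 1)) (tang r k) \<noteq> 0"
  shows "tang r (k + 1) = (- kappa r k) *\<^sub>R tang r (k - 1) + kappa_bar r k *\<^sub>R tang r k"
proof -
  have "det2 (tang r (k + 1)) (tang r k) = - det2 (tang r k) (tang r (k + 1))"
    by (simp add: det2_def)
  then show ?thesis
    using cramer_rule_det2[OF assms, of "tang r (k + 1)"] by (simp add: kappa_def kappa_bar_def)
qed

lemma kappa_nonzero:
  "det2 (tang r (k - 1)) (tang r k) \<noteq> 0 \<Longrightarrow> det2 (tang r k) (tang r (k + 1)) \<noteq> 0 \<Longrightarrow> kappa r k \<noteq> 0"
  by (simp add: kappa_def)

lemma matrix_maps_all_tangents:
  fixes A :: "real^2^2"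
  assumes I: "int_convex I" and nd: "nondegenerate I r" "nondegenerate I rb"
    and curv: "\<And>k. k - 1 \<in> I \<Longrightarrow> k \<in> I \<Longrightarrow> k + 1 \<in> I \<Longrightarrow> k + 2 \<in> I \<Longrightarrow>
           kappa r k = kappa rb k \<and> kappa_bar r k = kappa_bar rb k"
    and k0: "k0 - 1 \<in> I" "k0 \<in> I" "k0 + 1 \<in> I"
    and init: "A *v tang rb (k0 - 1) = tang r (k0 - 1)" "A *v tang rb k0 = tang r k0"
    and k: "k \<in> I" "k + 1 \<in> I"
  shows "A *v tang rb k = tang r k"
proof -
  let ?J = "{k. k \<in> I \<and> k + 1 \<in> I}"
  have I4: "k - 1 \<in> I" "k \<in> I" "k + 1 \<in> I" "k + 2 \<in> I"
    if "k - 1 \<in> ?J" "k \<in> ?J" "k + 1 \<in> ?J" for k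
    using that by (simp_all add: add.assoc)
  have rec_r: "tang r (k + 1) = (- kappa r k) *\<^sub>R tang r (k - 1) + kappa_bar r k *\<^sub>R tang r k"
    and rec_rb: "tang rb (k + 1) = (- kappa r k) *\<^sub>R tang rb (k - 1) + kappa_bar r k *\<^sub>R tang rb k"
    if "k - 1 \<in> ?J" "k \<in> ?J" "k + 1 \<in> ?J" for k
    using tang_recurrence[of r k] tang_recurrence[of rb k] curv[OF I4[OF that]]
      nondegenerateD[OF nd(1)] nondegenerateD[OF nd(2)] I4[OF that] by auto
  show ?thesis
  proof (rule second_order_recurrence_unique[OF int_convex_edges[OF I], of "k0 - 1"])
    show "(\<lambda>k. A *v tang rb k) (k + 1) =
        (- kappa r k) *\<^sub>R (\<lambda>k. A *v tang rb k) (k - 1) + kappa_bar r k *\<^sub>R (\<lambda>k. A *v tang rb k) k"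
      if "k - 1 \<in> ?J" "k \<in> ?J" "k + 1 \<in> ?J" for k
      using rec_rb[OF that]
      by (simp add: matrix_vector_mult_diff_distrib matrix_vector_mult_scaleR)
    show "- kappa r k \<noteq> 0" if "k - 1 \<in> ?J" "k \<in> ?J" "k + 1 \<in> ?J" for k
    proof -
      have "det2 (tang r (k - 1)) (tang r k) \<noteq> 0" "det2 (tang r k) (tang r (k + 1)) \<noteq> 0"
        using nondegenerateD[OF nd(1), of k] nondegenerateD[OF nd(1), of "k + 1"] I4[OF that]
        by (simp_all add: add.commute)
      then show ?thesis using kappa_nonzero[of r k] by simp
    qed
  qed (use k0 init k rec_r in simp_all)
qed

theorem proposition3p3:
  fixes I :: "int set" and r rb :: "int \<Rightarrow> real^2"
  assumes "int_interval I"
    and "nondegenerate I r" and "nondegenerate I rb"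
    and "\<And>k. k - 1 \<in> I \<Longrightarrow> k \<in> I \<Longrightarrow> k + 1 \<in> I \<Longrightarrow> k + 2 \<in> I \<Longrightarrow>
           kappa r k = kappa rb k \<and> kappa_bar r k = kappa_bar rb k"
  shows "\<exists>(A :: real^2^2) (C :: real^2). invertible A \<and> (\<forall>k\<in>I. r k = A *v rb k + C)"
proof -
  have I: "int_convex I"
    using assms(1) by (rule int_interval_imp_int_convex)
  obtain k0 where k0: "k0 - 1 \<in> I" "k0 \<in> I" "k0 + 1 \<in> I"
    using assms(1) unfolding int_interval_def by blast
  obtain A :: "real^2^2" where A: "invertible A"
    "A *v tang rb (k0 - 1) = tang r (k0 - 1)" "A *v tang rb k0 = tang r k0"
    using invertible_matrix_mapping_basis[OF nondegenerateD[OF assms(3) k0] nondegenerateD[OF assms(2) k0]]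
    by blast
  define C where "C = r k0 - A *v rb k0"
  have "r k - A *v rb k = C" if "k \<in> I" for k
    unfolding C_def
  proof (rule int_convex_constant[OF I k0(2) that])
    fix j
    assume "j \<in> I" "j + 1 \<in> I"
    then have "A *v tang rb j = tang r j"
      using matrix_maps_all_tangents[OF I assms(2-4) k0 A(2,3)] by blast
    then show "r (j + 1) - A *v rb (j + 1) = r j - A *v rb j"
      by (simp add: tang_def matrix_vector_mult_diff_distrib algebra_simps)
  qed
  then have "\<forall>k\<in>I. r k = A *v rb k + C"
    by (auto simp: diff_eq_eq add.commute)
  with A(1) show ?thesis by blast
qed

end
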